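(* Let $h\in\mathcal H$ and $\varphi(\underline{x})=h(x_0,x_1)$ on $X=[0,1]^{\mathbb N_0}$. If $\underline{x}\in\Omega_\varphi$ is periodic under $\sigma$, then $\underline{x}=a^\infty$ for some $a\in\mathrm{m}_h$.
   Context: $X=[0,1]^{\mathbb N_0}$ with metric $d_X(\underline{x},\underline{y})=\sum_{i\ge0}|x_i-y_i|/2^{i+1}$ and shift $\sigma(\underline{x})_i=x_{i+1}$. $\alpha_\varphi=\inf_\mu\int\varphi\,d\mu$ over $\sigma$-invariant Borel probability measures. $B(\underline{x},\underline{y},n;\varepsilon)=\{\underline{z}: d_X(\underline{x},\underline{z})<\varepsilon,\ d_X(\sigma^n\underline{z},\underline{y})<\varepsilon\}$; Mañé potential $S_\varphi(\underline{x},\underline{y})=\lim_{\varepsilon\to0}\inf\{\sum_{i=0}^{n-1}(\varphi(\sigma^i\underline{z})-\alpha_\varphi): n\in\mathbb N,\ \underline{z}\in B(\underline{x},\underline{y},n;\varepsilon)\}$; Aubry set $\Omega_\varphi=\{\underline{x}: S_\varphi(\underline{x},\underline{x})=0\}$. $h^*=\min_x h(x,x)$, $\mathrm{m}_h=\{a: h(a,a)=h^*\}$, $a^\infty=aaa\ldots$. A finite sequence $(x_k,\dots,x_l)$ in $[0,1]$ is minimal (for $h$) if $\sum_{i=k}^{l-1}h(x_i,x_{i+1})\le\sum_{i=k}^{l-1}h(y_i,y_{i+1})$ for every $(y_k,\dots,y_l)$ in $[0,1]$ with $y_k=x_k$, $y_l=x_l$. $\mathcal H$ is the set of Lipschitz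 $h:[0,1]^2\to\mathbb R$ such that (H3) if $\xi_1<\xi_2$ and $\eta_1<\eta_2$ then $h(\xi_1,\eta_1)+h(\xi_2,\eta_2)<h(\xi_1,\eta_2)+h(\xi_2,\eta_1)$; and (H4) if $(x_{-1},x_0,x_1)\ne(x'_{-1},x_0,x'_1)$ are both minimal then $(x_{-1}-x'_{-1})(x_1-x'_1)<0$. (It is known that $\alpha_\varphi=h^*$ in this setting.) *)

theory Defs
  imports "HOL-Probability.Probability"
begin

definition Xsp :: "(nat \<Rightarrow> real) set" where
  "Xsp = {x. \<forall>i. x i \<in> {0..1}}"

definition dX :: "(nat \<Rightarrow> real) \<Rightarrow> (nat \<Rightarrow> real) \<Rightarrow> real" where
  "dX x y = (\<Sum>i. \<bar>x i - y i\<bar> / 2 ^ (i + 1))"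

definition shift :: "(nat \<Rightarrow> real) \<Rightarrow> (nat \<Rightarrow> real)" where
  "shift x = (\<lambda>i. x (Suc i))"

definition inv_prob :: "(nat \<Rightarrow> real) measure \<Rightarrow> bool" where
  "inv_prob M \<longleftrightarrow> prob_space M \<and> sets M = sets (restrict_space borel Xsp)
     \<and> shift \<in> measurable M M \<and> distr M M shift = M"

definition alpha :: "((nat \<Rightarrow> real) \<Rightarrow> real) \<Rightarrow> real" where
  "alpha \<phi> = Inf {integral\<^sup>L M \<phi> | M. inv_prob M}"

definition Bset :: "(nat \<Rightarrow> real) \<Rightarrow> (nat \<Rightarrow> real) \<Rightarrow> nat \<Rightarrow> real \<Rightarrow> (nat \<Rightarrow> real) set" where
  "Bset x y n \<epsilon> = {z \<in> Xsp. dX x z < \<epsilon> \<and> dX ((shift ^^ n) z) y < \<epsilon>}"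

definition mane :: "((nat \<Rightarrow> real) \<Rightarrow> real) \<Rightarrow> (nat \<Rightarrow> real) \<Rightarrow> (nat \<Rightarrow> real) \<Rightarrow> ereal" where
  "mane \<phi> x y = Lim (at_right (0::real))
     (\<lambda>\<epsilon>. Inf {ereal (\<Sum>i<n. \<phi> ((shift ^^ i) z) - alpha \<phi>) | n z. n \<ge> 1 \<and> z \<in> Bset x y n \<epsilon>})"

definition aubry :: "((nat \<Rightarrow> real) \<Rightarrow> real) \<Rightarrow> (nat \<Rightarrow> real) set" where
  "aubry \<phi> = {x \<in> Xsp. mane \<phi> x x = 0}"

definition hstar :: "(real \<Rightarrow> real \<Rightarrow> real) \<Rightarrow> real" where
  "hstar h = Inf ((\<lambda>a. h a a) ` {0..1})"

definition mset_h :: "(real \<Rightarrow> real \<Rightarrow> real) \<Rightarrow> real set" where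
  "mset_h h = {a \<in> {0..1}. h a a = hstar h}"

definition cost :: "(real \<Rightarrow> real \<Rightarrow> real) \<Rightarrow> real list \<Rightarrow> real" where
  "cost h xs = (\<Sum>i<length xs - 1. h (xs ! i) (xs ! Suc i))"

definition minimal_seq :: "(real \<Rightarrow> real \<Rightarrow> real) \<Rightarrow> real list \<Rightarrow> bool" where
  "minimal_seq h xs \<longleftrightarrow> xs \<noteq> [] \<and> set xs \<subseteq> {0..1} \<and>
     (\<forall>ys. length ys = length xs \<and> set ys \<subseteq> {0..1} \<and> hd ys = hd xs \<and> last ys = last xs
        \<longrightarrow> cost h xs \<le> cost h ys)"

definition classH :: "(real \<Rightarrow> real \<Rightarrow> real) \<Rightarrow> bool" where
  "classH h \<longleftrightarrow>
     (\<exists>C::real. C-lipschitz_on ({0..1} \<times> {0..1}) (\<lambda>(a, b). h a b)) \<and>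
     (\<forall>\<xi>1 \<xi>2 \<eta>1 \<eta>2 :: real. \<xi>1 \<in> {0..1} \<and> \<xi>2 \<in> {0..1} \<and> \<eta>1 \<in> {0..1} \<and> \<eta>2 \<in> {0..1}
        \<and> \<xi>1 < \<xi>2 \<and> \<eta>1 < \<eta>2 \<longrightarrow> h \<xi>1 \<eta>1 + h \<xi>2 \<eta>2 < h \<xi>1 \<eta>2 + h \<xi>2 \<eta>1) \<and>
     (\<forall>a x0 b a' b' :: real. minimal_seq h [a, x0, b] \<and> minimal_seq h [a', x0, b'] \<and> (a, b) \<noteq> (a', b')
        \<longrightarrow> (a - a') * (b - b') < 0)"

end

theory Submission
  imports Defs
begin

text \<open>
  A point x of the Aubry set is shadowed by closed cycles
  z_0, ..., z_(n-1) whose cyclic cost (sum of h(z_i, z_(i+1)), indices mod n) is at most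
  n h* + delta: the orbit segments realising the Mane potential can be closed up at Lipschitz
  cost, and alpha <= h* because Dirac measures at constant sequences are invariant.
  Conversely, the Monge inequality (H3) lets one cut a maximal point out of any cycle without
  increasing its cost, so every cycle costs at least the sum of h(z_i, z_i) >= n h*; this
  already gives h(x_0, x_0) = h*. If x is periodic but not constant, it has an ascent
  x_j < x_(j+1), which the shadowing cycles inherit. A cycle that goes up must also come down,
  and the strict Monge inequality turns the two crossings into a fixed positive surplus over
  n h*, a contradiction.
\<close>

section \<open>Costs of cycles under the Monge condition\<close>

lemma cost_singleton [simp]: "cost h [a] = 0"
  by (simp add: cost_def)

lemma cost_Cons_Cons [simp]: "cost h (a # b # xs) = h a b + cost h (b # xs)"
  unfolding cost_def by (simp add: sum.lessThan_Suc_shift del: sum.lessThan_Suc)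

lemma cost_append:
  "xs \<noteq> [] \<Longrightarrow> ys \<noteq> [] \<Longrightarrow> cost h (xs @ ys) = cost h xs + h (last xs) (hd ys) + cost h ys"
proof (induction xs rule: induct_list012)
  case (3 a b xs)
  then show ?case by simp
qed (auto simp: neq_Nil_conv)

lemma cost_map_upt: "cost h (map z [0..<Suc n]) = (\<Sum>i<n. h (z i) (z (Suc i)))"
  unfolding cost_def by (intro sum.cong) (simp_all del: upt_Suc)

definition cycle_cost :: "(real \<Rightarrow> real \<Rightarrow> real) \<Rightarrow> real list \<Rightarrow> real" where
  "cycle_cost h ws = cost h ws + h (last ws) (hd ws)"

definition diagonal_cost :: "(real \<Rightarrow> real \<Rightarrow> real) \<Rightarrow> real list \<Rightarrow> real" where
  "diagonal_cost h ws = (\<Sum>a\<leftarrow>ws. h a a)"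

definition twist :: "(real \<Rightarrow> real \<Rightarrow> real) \<Rightarrow> real \<Rightarrow> real \<Rightarrow> real \<Rightarrow> real \<Rightarrow> real" where
  "twist h p q r s = h p s + h q r - h p r - h q s"

definition monge_on :: "real set \<Rightarrow> (real \<Rightarrow> real \<Rightarrow> real) \<Rightarrow> bool" where
  "monge_on S h \<longleftrightarrow> (\<forall>p\<in>S. \<forall>q\<in>S. \<forall>r\<in>S. \<forall>s\<in>S. p \<le> q \<longrightarrow> r \<le> s \<longrightarrow> 0 \<le> twist h p q r s)"

definition strictly_monge_on :: "real set \<Rightarrow> (real \<Rightarrow> real \<Rightarrow> real) \<Rightarrow> bool" where
  "strictly_monge_on S h \<longleftrightarrow> (\<forall>p\<in>S. \<forall>q\<in>S. \<forall>r\<in>S. \<forall>s\<in>S. p < q \<longrightarrow> r < s \<longrightarrow> 0 < twist h p q r s)"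

lemma monge_onD:
  "monge_on S h \<Longrightarrow> p \<in> S \<Longrightarrow> q \<in> S \<Longrightarrow> r \<in> S \<Longrightarrow> s \<in> S \<Longrightarrow> p \<le> q \<Longrightarrow> r \<le> s
    \<Longrightarrow> 0 \<le> twist h p q r s"
  unfolding monge_on_def by blast

lemma strictly_monge_onD:
  "strictly_monge_on S h \<Longrightarrow> p \<in> S \<Longrightarrow> q \<in> S \<Longrightarrow> r \<in> S \<Longrightarrow> s \<in> S \<Longrightarrow> p < q \<Longrightarrow> r < s
    \<Longrightarrow> 0 < twist h p q r s"
  unfolding strictly_monge_on_def by blast

lemma strictly_monge_imp_monge:
  assumes "strictly_monge_on S h"
  shows "monge_on S h"
  unfolding monge_on_def
proof (intro ballI impI)
  fix p q r s assume in_S: "p \<in> S" "q \<in> S" "r \<in> S" "s \<in> S" and le: "p \<le> q" "r \<le> s"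
  show "0 \<le> twist h p q r s"
  proof (cases "p < q \<and> r < s")
    case True
    then show ?thesis using strictly_monge_onD[OF assms in_S] by fastforce
  next
    case False
    then have "p = q \<or> r = s" using le by auto
    then show ?thesis by (auto simp: twist_def)
  qed
qed

lemma twist_mono:
  assumes monge: "monge_on S h"
    and in_S: "p \<in> S" "p' \<in> S" "q' \<in> S" "q \<in> S" "r \<in> S" "r' \<in> S" "s' \<in> S" "s \<in> S"
    and le: "p \<le> p'" "p' \<le> q'" "q' \<le> q" "r \<le> r'" "r' \<le> s'" "s' \<le> s"
  shows "twist h p' q' r' s' \<le> twist h p q r s"
proof -
  \<comment> \<open>the twist is additive when the rectangle \<open>[p, q] \<times> [r, s]\<close> is subdivided\<close>
  have "twist h p q r s = twist h p p' r s + twist h q' q r s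
      + twist h p' q' r r' + twist h p' q' r' s' + twist h p' q' s' s"
    by (simp add: twist_def)
  moreover have "0 \<le> twist h p p' r s" "0 \<le> twist h q' q r s"
    "0 \<le> twist h p' q' r r'" "0 \<le> twist h p' q' s' s"
    using monge_onD[OF monge] in_S le by (meson order_trans)+
  ultimately show ?thesis by linarith
qed

lemma cycle_cost_singleton [simp]: "cycle_cost h [a] = h a a"
  by (simp add: cycle_cost_def)

lemma cycle_cost_append:
  assumes "xs \<noteq> []" "ys \<noteq> []"
  shows "cycle_cost h (xs @ ys) = cycle_cost h xs + cycle_cost h ys + twist h (last ys) (last xs) (hd ys) (hd xs)"
  using assms by (simp add: cycle_cost_def cost_append twist_def)

lemma cycle_cost_rotate1: "cycle_cost h (rotate1 ws) = cycle_cost h ws"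
proof (cases ws)
  case (Cons a xs)
  then show ?thesis
    using cycle_cost_append[of "[a]" xs h] cycle_cost_append[of xs "[a]" h]
    by (cases "xs = []") (simp_all add: twist_def)
qed simp

lemma cycle_cost_rotate: "cycle_cost h (rotate n ws) = cycle_cost h ws"
  by (induction n) (simp_all add: cycle_cost_rotate1)

lemma diagonal_cost_append: "diagonal_cost h (xs @ ys) = diagonal_cost h xs + diagonal_cost h ys"
  by (simp add: diagonal_cost_def)

lemma diagonal_cost_rotate1: "diagonal_cost h (rotate1 ws) = diagonal_cost h ws"
  by (cases ws) (simp_all add: diagonal_cost_def)

lemma diagonal_cost_rotate: "diagonal_cost h (rotate n ws) = diagonal_cost h ws"
  by (induction n) (simp_all add: diagonal_cost_rotate1)

text \<open>
  Rotate a maximal element \<open>m\<close> to the front. By the Monge inequality the detour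
  \<open>last \<rightarrow> m \<rightarrow> hd\<close> costs at least the loop \<open>m \<rightarrow> m\<close> plus the direct step \<open>last \<rightarrow> hd\<close>,
  so \<open>m\<close> can be cut out of the cycle.
\<close>
lemma diagonal_cost_le_cycle_cost:
  assumes monge: "monge_on S h" and "set ws \<subseteq> S" "ws \<noteq> []"
  shows "diagonal_cost h ws \<le> cycle_cost h ws"
  using assms(2,3)
proof (induction "length ws" arbitrary: ws rule: less_induct)
  case less
  define m where "m = Max (set ws)"
  have "m \<in> set ws" using less.prems by (simp add: m_def)
  then obtain k where k: "k < length ws" "ws ! k = m" by (metis in_set_conv_nth)
  then have "hd (rotate k ws) = m" using hd_rotate_conv_nth[of ws k] less.prems(2) by simp
  then obtain rest where rot: "rotate k ws = m # rest"
    using less.prems by (cases "rotate k ws") auto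
  have "diagonal_cost h (m # rest) \<le> cycle_cost h (m # rest)"
  proof (cases "rest = []")
    case False
    have rest: "set rest \<subseteq> S" "\<And>y. y \<in> set rest \<Longrightarrow> y \<le> m"
      using less.prems arg_cong[OF rot, of set] by (auto simp: m_def intro: Max_ge)
    have "length rest < length ws" using arg_cong[OF rot, of length] by simp
    then have "diagonal_cost h rest \<le> cycle_cost h rest"
      using less.hyps rest(1) False by blast
    moreover have "0 \<le> twist h (last rest) m (hd rest) m"
      using False rest \<open>m \<in> set ws\<close> less.prems(1)
      by (intro monge_onD[OF monge]) auto
    moreover have "cycle_cost h (m # rest) = h m m + cycle_cost h rest + twist h (last rest) m (hd rest) m"
      using cycle_cost_append[of "[m]" rest h] False by simp
    ultimately show ?thesis by (simp add: diagonal_cost_def)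
  qed (simp add: diagonal_cost_def)
  then show ?case by (metis rot cycle_cost_rotate diagonal_cost_rotate)
qed

lemma down_crossing:
  fixes t :: "'a::linorder"
  assumes "xs \<noteq> []" "t < hd xs" "last xs \<le> t"
  obtains us c d vs where "xs = us @ c # d # vs" "t < c" "d \<le> t"
  using assms
proof (induction xs arbitrary: thesis)
  case (Cons y ys)
  then have "ys \<noteq> []" by auto
  show ?case
  proof (cases "hd ys \<le> t")
    case True
    then show ?thesis
      using Cons.prems \<open>ys \<noteq> []\<close> by (intro Cons.prems(1)[of "[]" y "hd ys" "tl ys"]) auto
  next
    case False
    then show ?thesis
      using Cons \<open>ys \<noteq> []\<close> by (metis append_Cons last_ConsR not_le)
  qed
qed simp

text \<open>
  A cycle that starts above \<open>t\<close> and ends below it crosses \<open>t\<close> downwards at some step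
  \<open>c \<rightarrow> d\<close>. Cutting it there and at the closing step splits it into two cycles, and the
  surplus is a twist over a rectangle containing \<open>[a, t] \<times> [t, b]\<close>.
\<close>
lemma diagonal_cost_add_twist_le_cycle_cost:
  assumes monge: "monge_on S h" and ws: "set ws \<subseteq> S" "ws \<noteq> []"
    and up: "last ws \<le> a" "a < t" "t < b" "b \<le> hd ws"
    and in_S: "a \<in> S" "t \<in> S" "b \<in> S"
  shows "diagonal_cost h ws + twist h a t t b \<le> cycle_cost h ws"
proof -
  have "t < hd ws" "last ws \<le> t" using up by simp_all
  then obtain us c d vs where split: "ws = us @ c # d # vs" and cd: "t < c" "d \<le> t"
    by (rule down_crossing[OF ws(2)])
  have sets: "set (us @ [c]) \<subseteq> S" "set (d # vs) \<subseteq> S"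
    and in_S': "last ws \<in> S" "hd ws \<in> S" "c \<in> S" "d \<in> S"
    using ws split last_in_set[OF ws(2)] hd_in_set[OF ws(2)] by auto
  have "hd (us @ [c]) = hd ws" "last (d # vs) = last ws" using split by (cases us; simp)+
  then have "cycle_cost h ws
      = cycle_cost h (us @ [c]) + cycle_cost h (d # vs) + twist h (last ws) c d (hd ws)"
    using cycle_cost_append[of "us @ [c]" "d # vs" h] split by simp
  moreover have "diagonal_cost h ws = diagonal_cost h (us @ [c]) + diagonal_cost h (d # vs)"
    using split diagonal_cost_append[of h "us @ [c]" "d # vs"] by simp
  moreover have "twist h a t t b \<le> twist h (last ws) c d (hd ws)"
    using up cd in_S in_S' by (intro twist_mono[OF monge]) auto
  moreover have "diagonal_cost h (us @ [c]) \<le> cycle_cost h (us @ [c])"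
    "diagonal_cost h (d # vs) \<le> cycle_cost h (d # vs)"
    using diagonal_cost_le_cycle_cost[OF monge] sets by auto
  ultimately show ?thesis by linarith
qed

lemma hd_last_rotate_Suc:
  assumes "i < length ws"
  shows "hd (rotate (Suc i) ws) = ws ! (Suc i mod length ws)" "last (rotate (Suc i) ws) = ws ! i"
proof -
  have ne: "ws \<noteq> []" using assms by auto
  then show "hd (rotate (Suc i) ws) = ws ! (Suc i mod length ws)"
    by (rule hd_rotate_conv_nth)
  have "last (rotate (Suc i) ws) = ws ! ((Suc i + (length ws - 1)) mod length ws)"
    using ne by (simp add: last_conv_nth nth_rotate del: rotate_Suc)
  also have "Suc i + (length ws - 1) = i + length ws" using assms by simp
  finally show "last (rotate (Suc i) ws) = ws ! i" using assms by simp
qed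

lemma sum_path_eq_cycle_cost:
  assumes "0 < n"
  shows "(\<Sum>i<n. h (z i) (z (Suc i)))
    = cycle_cost h (map z [0..<n]) + (h (z (n - 1)) (z n) - h (z (n - 1)) (z 0))"
proof -
  obtain m where n: "n = Suc m" using assms gr0_conv_Suc by blast
  have "cycle_cost h (map z [0..<Suc m]) = cost h (map z [0..<Suc m]) + h (z m) (z 0)"
    by (simp add: cycle_cost_def last_map hd_map del: upt_Suc)
  then show ?thesis by (simp add: n cost_map_upt[of h z m] del: upt_Suc)
qed

section \<open>Periodic sequences\<close>

lemma periodic_mod:
  fixes f :: "nat \<Rightarrow> 'a"
  assumes per: "\<And>i. f (i + p) = f i"
  shows "f (i mod p) = f i"
proof (induction i rule: less_induct)
  case (less i)
  show ?case
  proof (cases "p = 0 \<or> i < p")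
    case False
    then have "f (i mod p) = f ((i - p) mod p)" by (simp add: le_mod_geq)
    also have "\<dots> = f (i - p)" using less False by simp
    also have "\<dots> = f i" using per[of "i - p"] False by simp
    finally show ?thesis .
  qed auto
qed

lemma periodic_extend:
  fixes f :: "nat \<Rightarrow> 'a"
  assumes per: "\<And>i. f (i + p) = f i" and "0 < p" and short: "\<And>i. i < p \<Longrightarrow> f (i + q) = f i"
  shows "f (i + q) = f i"
proof (induction i rule: less_induct)
  case (less i)
  show ?case
  proof (cases "i < p")
    case False
    then have "f (i + q) = f ((i - p) + q + p)" by simp
    also have "\<dots> = f ((i - p) + q)" by (rule per)
    also have "\<dots> = f (i - p)" by (rule less.IH) (use \<open>0 < p\<close> False in simp)
    also have "\<dots> = f i" using per[of "i - p"] False by simp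
    finally show ?thesis .
  qed (rule short)
qed

lemma periodic_nonconstant_ascent:
  fixes x :: "nat \<Rightarrow> 'a::linorder"
  assumes per: "\<And>i. x (i + p) = x i" and "0 < p" and nonconst: "x \<noteq> (\<lambda>_. x 0)"
  obtains j where "j < p" "x j < x (Suc j)"
proof -
  have "\<exists>j<p. x j < x (Suc j)"
  proof (rule ccontr)
    assume "\<not> (\<exists>j<p. x j < x (Suc j))"
    then have descent: "j < p \<Longrightarrow> x (Suc j) \<le> x j" for j using not_less by blast
    have upper: "x k \<le> x 0" if "k \<le> p" for k
      using that by (induction k) (simp, metis Suc_le_lessD Suc_leD descent order_trans)
    have lower: "x p \<le> x k" if "k \<le> p" for k
      using that by (induction k rule: inc_induct) (auto intro: order_trans descent)
    have "x k = x 0" if "k \<le> p" for k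
      using upper[OF that] lower[OF that] per[of 0] by simp
    then have "x i = x 0" for i
      using periodic_mod[of x p i] per \<open>0 < p\<close> by (metis mod_less_divisor less_imp_le)
    with nonconst show False by auto
  qed
  then show thesis using that by blast
qed

lemma periodic_finite_range:
  fixes f :: "nat \<Rightarrow> 'a"
  assumes "\<And>i. f (i + p) = f i" "0 < p"
  shows "finite (range f)"
proof -
  have "range f = f ` {..<p}"
    using periodic_mod[of f p] assms by (auto simp: image_iff) (metis lessThan_iff mod_less_divisor)
  then show ?thesis by simp
qed

lemma finite_range_separated:
  fixes x :: "'a \<Rightarrow> real"
  assumes "finite (range x)"
  obtains g where "0 < g" "\<And>u v. x u \<noteq> x v \<Longrightarrow> g \<le> \<bar>x u - x v\<bar>"
proof -
  define D where "D = (\<lambda>(a, b). \<bar>a - b\<bar>) ` {(a, b) \<in> range x \<times> range x. a \<noteq> b}"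
  have "finite (range x \<times> range x)" using assms by simp
  then have "finite D"
    unfolding D_def by (intro finite_imageI finite_subset[OF _ \<open>finite (range x \<times> range x)\<close>]) auto
  show thesis
  proof (rule that)
    show "0 < Min (insert 1 D)" using \<open>finite D\<close> by (auto simp: D_def)
    fix u v assume "x u \<noteq> x v"
    then have "\<bar>x u - x v\<bar> \<in> D" by (auto simp: D_def image_iff)
    then show "Min (insert 1 D) \<le> \<bar>x u - x v\<bar>" using \<open>finite D\<close> by simp
  qed
qed

text \<open>
  If the cycle is shorter than the period, \<open>x\<close> is \<open>n\<close>-periodic as well: \<open>z (i + n)\<close> is
  within \<open>e\<close> of both \<open>x (i + n)\<close> and \<open>x i\<close>, whereas distinct values of \<open>x\<close> are more
  than \<open>2 e\<close> apart.
\<close>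
lemma shadowing_cyclic_step:
  fixes x z :: "nat \<Rightarrow> real"
  assumes per: "\<And>i. x (i + p) = x i" and "j < p" "0 < n"
    and close: "\<And>k. k \<le> 2 * p \<Longrightarrow> \<bar>z k - x k\<bar> \<le> e"
      "\<And>k. k \<le> 2 * p \<Longrightarrow> \<bar>z (k + n) - x k\<bar> \<le> e"
    and sep: "\<And>u v. x u \<noteq> x v \<Longrightarrow> 2 * e < \<bar>x u - x v\<bar>"
  obtains i where "i < n" "\<bar>z i - x j\<bar> \<le> e" "\<bar>z (Suc i mod n) - x (Suc j)\<bar> \<le> e"
proof (cases "p < n")
  case True
  then show thesis
    using that[of j] close(1)[of j] close(1)[of "Suc j"] \<open>j < p\<close> by simp
next
  case False
  have "x (i + n) = x i" if "i < p" for i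
  proof (rule ccontr)
    assume "x (i + n) \<noteq> x i"
    then have "2 * e < \<bar>x (i + n) - x i\<bar>" by (rule sep)
    moreover have "\<bar>z (i + n) - x (i + n)\<bar> \<le> e" "\<bar>z (i + n) - x i\<bar> \<le> e"
      using close(1)[of "i + n"] close(2)[of i] that False by simp_all
    ultimately show False by linarith
  qed
  then have per_n: "x (i + n) = x i" for i
    using periodic_extend[of x p, OF per] \<open>j < p\<close> by simp
  have "x (j mod n) = x j" "x (Suc j mod n) = x (Suc j)"
    using periodic_mod[of x n, OF per_n] by blast+
  moreover have "j mod n \<le> 2 * p" "Suc j mod n \<le> 2 * p"
    using False mod_less_divisor[OF \<open>0 < n\<close>, of j] mod_less_divisor[OF \<open>0 < n\<close>, of "Suc j"] by linarith+
  ultimately show thesis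
    using that[of "j mod n"] close(1)[of "j mod n"] close(1)[of "Suc j mod n"] \<open>0 < n\<close>
    by (simp add: mod_Suc_eq)
qed

section \<open>Orbit segments near the Aubry set\<close>

lemma shift_funpow: "(shift ^^ n) z = (\<lambda>i. z (i + n))"
  by (induction n) (auto simp: shift_def)

lemma abs_diff_le_dX:
  assumes "f \<in> Xsp" "g \<in> Xsp"
  shows "\<bar>f k - g k\<bar> \<le> 2 ^ (k + 1) * dX f g"
proof -
  let ?a = "\<lambda>i. \<bar>f i - g i\<bar> / 2 ^ (i + 1)"
  have "norm (?a i) \<le> (1/2) ^ i" for i
  proof -
    have "f i \<in> {0..1}" "g i \<in> {0..1}" using assms by (auto simp: Xsp_def)
    then have "\<bar>f i - g i\<bar> \<le> 1" by auto
    then have "?a i \<le> 1 / 2 ^ (i + 1)" by (simp add: divide_right_mono)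
    also have "\<dots> \<le> 1 / 2 ^ i" by (rule divide_left_mono) auto
    also have "\<dots> = (1/2) ^ i" by (simp add: power_one_over)
    finally show ?thesis by simp
  qed
  then have "summable ?a"
    by (intro summable_comparison_test[OF _ summable_geometric[of "1/2::real"]]) auto
  then have "?a k \<le> dX f g"
    unfolding dX_def using sum_le_suminf[of ?a "{k}"] by simp
  then show ?thesis by (simp add: field_simps)
qed

definition mane_approx ::
    "((nat \<Rightarrow> real) \<Rightarrow> real) \<Rightarrow> (nat \<Rightarrow> real) \<Rightarrow> (nat \<Rightarrow> real) \<Rightarrow> real \<Rightarrow> ereal" where
  "mane_approx \<phi> x y \<epsilon> =
     Inf {ereal (\<Sum>i<n. \<phi> ((shift ^^ i) z) - alpha \<phi>) | n z. n \<ge> 1 \<and> z \<in> Bset x y n \<epsilon>}"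

lemma Bset_mono: "\<epsilon> \<le> \<epsilon>' \<Longrightarrow> Bset x y n \<epsilon> \<subseteq> Bset x y n \<epsilon>'"
  by (auto simp: Bset_def)

lemma mane_approx_antimono: "\<epsilon> \<le> \<epsilon>' \<Longrightarrow> mane_approx \<phi> x y \<epsilon>' \<le> mane_approx \<phi> x y \<epsilon>"
  unfolding mane_approx_def using Bset_mono[of \<epsilon> \<epsilon>' x y] by (intro Inf_superset_mono) blast

lemma mane_eq_SUP: "mane \<phi> x y = (SUP \<epsilon>\<in>{0<..}. mane_approx \<phi> x y \<epsilon>)"
proof -
  let ?F = "mane_approx \<phi> x y" and ?S = "SUP \<epsilon>\<in>{0<..}. mane_approx \<phi> x y \<epsilon>"
  have "(?F \<longlongrightarrow> ?S) (at_right 0)"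
  proof (rule order_tendstoI)
    fix a assume "a < ?S"
    then obtain \<epsilon>\<^sub>0 where "\<epsilon>\<^sub>0 > 0" and a: "a < ?F \<epsilon>\<^sub>0" unfolding less_SUP_iff by auto
    from eventually_at_right_real[OF this(1)]
    show "eventually (\<lambda>\<epsilon>. a < ?F \<epsilon>) (at_right 0)"
    proof (rule eventually_mono)
      fix \<epsilon> assume "\<epsilon> \<in> {0<..<\<epsilon>\<^sub>0}"
      then have "?F \<epsilon>\<^sub>0 \<le> ?F \<epsilon>" by (intro mane_approx_antimono) simp
      with a show "a < ?F \<epsilon>" by (rule less_le_trans)
    qed
  next
    fix a assume "?S < a"
    from eventually_at_right_real[OF zero_less_one]
    show "eventually (\<lambda>\<epsilon>. ?F \<epsilon> < a) (at_right 0)"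
    proof (rule eventually_mono)
      fix \<epsilon> :: real assume "\<epsilon> \<in> {0<..<1}"
      then have "?F \<epsilon> \<le> ?S" by (intro SUP_upper) simp
      then show "?F \<epsilon> < a" using \<open>?S < a\<close> by (rule le_less_trans)
    qed
  qed
  moreover have "mane \<phi> x y = Lim (at_right 0) ?F"
    unfolding mane_def mane_approx_def by (rule refl)
  ultimately show ?thesis
    using tendsto_Lim[OF trivial_limit_at_right_real] by simp
qed

lemma aubry_returning_orbit:
  assumes "x \<in> aubry \<phi>" "\<epsilon> > 0" "\<delta> > 0"
  obtains n z where "n \<ge> 1" "z \<in> Bset x x n \<epsilon>" "(\<Sum>i<n. \<phi> ((shift ^^ i) z) - alpha \<phi>) < \<delta>"
proof -
  have "mane_approx \<phi> x x \<epsilon> \<le> mane \<phi> x x"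
    unfolding mane_eq_SUP using assms(2) by (intro SUP_upper) auto
  also have "\<dots> < ereal \<delta>" using assms(1,3) by (simp add: aubry_def)
  finally obtain n z where "n \<ge> 1" "z \<in> Bset x x n \<epsilon>"
    "ereal (\<Sum>i<n. \<phi> ((shift ^^ i) z) - alpha \<phi>) < ereal \<delta>"
    unfolding mane_approx_def Inf_less_iff by blast
  then show thesis using that by simp
qed

section \<open>The minimal ergodic average and \<open>h\<^sup>*\<close>\<close>

lemma shift_measurable: "shift \<in> measurable (restrict_space borel Xsp) (restrict_space borel Xsp)"
proof -
  have "continuous_on UNIV shift"
    unfolding shift_def by (intro continuous_on_coordinatewise_then_product continuous_on_product_coordinates)
  then show ?thesis
    by (intro measurable_restrict_space3 borel_measurable_continuous_onI) (auto simp: Xsp_def shift_def)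
qed

lemma inv_prob_return:
  assumes "c \<in> Xsp" "shift c = c"
  shows "inv_prob (return (restrict_space borel Xsp) c)"
proof -
  let ?R = "restrict_space borel Xsp"
  have c: "c \<in> space ?R" using assms(1) by (simp add: space_restrict_space)
  have "distr (return ?R c) (return ?R c) shift = distr (return ?R c) ?R shift"
    by (rule distr_cong) auto
  also have "\<dots> = return ?R c"
    using distr_return[OF shift_measurable c] assms(2) by simp
  finally show ?thesis
    unfolding inv_prob_def using prob_space_return[OF c] shift_measurable
    by (simp add: measurable_cong_sets[OF sets_return sets_return])
qed

lemma alpha_le_integral:
  assumes M: "inv_prob M" and bound: "\<And>z. z \<in> Xsp \<Longrightarrow> B \<le> \<phi> z"
  shows "alpha \<phi> \<le> integral\<^sup>L M \<phi>"
proof -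
  have "min B 0 \<le> integral\<^sup>L M' \<phi>" if "inv_prob M'" for M'
  proof (cases "integrable M' \<phi>")
    case True
    have "prob_space M'" and "space M' = Xsp"
      using that sets_eq_imp_space_eq[of M' "restrict_space borel Xsp"]
      by (auto simp: inv_prob_def space_restrict_space)
    then have "B \<le> integral\<^sup>L M' \<phi>"
      using bound by (intro prob_space.integral_ge_const True AE_I2) auto
    then show ?thesis by linarith
  qed (simp add: not_integrable_integral_eq)
  then have "bdd_below {integral\<^sup>L M' \<phi> | M'. inv_prob M'}"
    by (intro bdd_belowI[of _ "min B 0"]) auto
  then show ?thesis
    unfolding alpha_def by (rule cInf_lower[rotated]) (use M in auto)
qed

lemma alpha_le_fixed_point:
  assumes "\<phi> \<in> borel_measurable (restrict_space borel Xsp)" "\<And>z. z \<in> Xsp \<Longrightarrow> B \<le> \<phi> z"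
    and "c \<in> Xsp" "shift c = c"
  shows "alpha \<phi> \<le> \<phi> c"
proof -
  have "alpha \<phi> \<le> integral\<^sup>L (return (restrict_space borel Xsp) c) \<phi>"
    using assms by (intro alpha_le_integral inv_prob_return)
  also have "\<dots> = \<phi> c"
    using assms(1,3) by (simp add: integral_return space_restrict_space)
  finally show ?thesis .
qed

lemma continuous_on_square_bounded_below:
  fixes h :: "real \<Rightarrow> real \<Rightarrow> real"
  assumes "continuous_on ({0..1} \<times> {0..1}) (\<lambda>(a, b). h a b)"
  obtains B :: real where "\<And>a b. a \<in> {0..1} \<Longrightarrow> b \<in> {0..1} \<Longrightarrow> B \<le> h a b"
proof -
  have "\<exists>m \<in> {0..1} \<times> {0..1}. \<forall>y \<in> {0..1} \<times> {0..1}. (\<lambda>(a, b). h a b) m \<le> (\<lambda>(a, b). h a b) y"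
    by (rule continuous_attains_inf) (use assms in \<open>auto intro!: compact_Times\<close>)
  then show thesis using that by fastforce
qed

lemma hstar_le:
  assumes "continuous_on ({0..1} \<times> {0..1}) (\<lambda>(a, b). h a b)" "a \<in> {0..1}"
  shows "hstar h \<le> h a a"
proof -
  obtain B where "\<And>a. a \<in> {0..1} \<Longrightarrow> B \<le> h a a"
    using continuous_on_square_bounded_below[OF assms(1)] by metis
  then show ?thesis
    unfolding hstar_def using assms(2) by (intro cInf_lower bdd_belowI2) auto
qed

lemma length_mult_hstar_le_diagonal_cost:
  assumes "continuous_on ({0..1} \<times> {0..1}) (\<lambda>(a, b). h a b)" "set ws \<subseteq> {0..1}"
  shows "length ws * hstar h \<le> diagonal_cost h ws"
  using assms(2) hstar_le[OF assms(1)]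
  by (induction ws) (auto simp: diagonal_cost_def algebra_simps intro: add_mono)

lemma hd_diagonal_add_hstar_le_cycle_cost:
  assumes monge: "monge_on {0..1} h" and cont: "continuous_on ({0..1} \<times> {0..1}) (\<lambda>(a, b). h a b)"
    and ws: "set (a # ws) \<subseteq> {0..1}"
  shows "h a a + length ws * hstar h \<le> cycle_cost h (a # ws)"
proof -
  have "h a a + length ws * hstar h \<le> diagonal_cost h (a # ws)"
    using length_mult_hstar_le_diagonal_cost[OF cont, of ws] ws by (simp add: diagonal_cost_def)
  also have "\<dots> \<le> cycle_cost h (a # ws)"
    using ws by (intro diagonal_cost_le_cycle_cost[OF monge]) auto
  finally show ?thesis .
qed

lemma hstar_add_twist_le_cycle_cost:
  assumes monge: "monge_on {0..1} h" and cont: "continuous_on ({0..1} \<times> {0..1}) (\<lambda>(a, b). h a b)"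
    and ws: "set ws \<subseteq> {0..1}" "i < length ws"
    and up: "ws ! i \<le> a" "a < t" "t < b" "b \<le> ws ! (Suc i mod length ws)"
    and in_01: "a \<in> {0..1}" "t \<in> {0..1}" "b \<in> {0..1}"
  shows "length ws * hstar h + twist h a t t b \<le> cycle_cost h ws"
proof -
  let ?rs = "rotate (Suc i) ws"
  have "diagonal_cost h ?rs + twist h a t t b \<le> cycle_cost h ?rs"
    using ws up in_01 hd_last_rotate_Suc[OF ws(2)]
    by (intro diagonal_cost_add_twist_le_cycle_cost[OF monge]) (auto simp del: rotate_Suc)
  then show ?thesis
    using length_mult_hstar_le_diagonal_cost[OF cont ws(1)]
    by (simp add: cycle_cost_rotate diagonal_cost_rotate del: rotate_Suc)
qed

lemma alpha_le_hstar:
  assumes cont: "continuous_on ({0..1} \<times> {0..1}) (\<lambda>(a, b). h a b)"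
  shows "alpha (\<lambda>z. h (z 0) (z 1)) \<le> hstar h"
proof -
  let ?\<phi> = "\<lambda>z::nat \<Rightarrow> real. h (z 0) (z 1)"
  obtain B where B: "\<And>a b. a \<in> {0..1} \<Longrightarrow> b \<in> {0..1} \<Longrightarrow> B \<le> h a b"
    using continuous_on_square_bounded_below[OF cont] by metis
  have "continuous_on Xsp (\<lambda>z::nat \<Rightarrow> real. (z 0, z 1))"
    by (intro continuous_intros continuous_on_subset[OF continuous_on_product_coordinates]) auto
  then have "continuous_on Xsp ?\<phi>"
    using continuous_on_compose2[OF cont] by (fastforce simp: Xsp_def)
  then have meas: "?\<phi> \<in> borel_measurable (restrict_space borel Xsp)"
    by (rule borel_measurable_continuous_on_restrict)
  have "alpha ?\<phi> \<le> h a a" if "a \<in> {0..1}" for a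
    using alpha_le_fixed_point[OF meas, of B "\<lambda>_. a"] B that
    by (simp add: Xsp_def shift_def)
  then show ?thesis
    unfolding hstar_def by (intro cInf_greatest) auto
qed

section \<open>Periodic points of the Aubry set\<close>

lemma lipschitz_on_Times_abs_diff:
  fixes h :: "real \<Rightarrow> real \<Rightarrow> real"
  assumes "C-lipschitz_on (S \<times> T) (\<lambda>(a, b). h a b)" "u \<in> S" "u' \<in> S" "v \<in> T" "v' \<in> T"
  shows "\<bar>h u v - h u' v'\<bar> \<le> C * (\<bar>u - u'\<bar> + \<bar>v - v'\<bar>)"
proof -
  have "\<bar>h u v - h u' v'\<bar> \<le> C * dist (u, v) (u', v')"
    using lipschitz_onD[OF assms(1), of "(u, v)" "(u', v')"] assms(2-) by (simp add: dist_real_def)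
  also have "\<dots> \<le> C * (\<bar>u - u'\<bar> + \<bar>v - v'\<bar>)"
    using lipschitz_on_nonneg[OF assms(1)] sqrt_sum_squares_le_sum_abs[of "u - u'" "v - v'"]
    by (intro mult_left_mono) (auto simp: dist_Pair_Pair dist_real_def)
  finally show ?thesis .
qed

lemma aubry_returning_path:
  fixes h :: "real \<Rightarrow> real \<Rightarrow> real"
  assumes x: "x \<in> aubry (\<lambda>z. h (z 0) (z 1))" and "\<epsilon> > 0" "\<delta> > 0"
  obtains n z where "0 < n" "\<And>i. z i \<in> {0..1}"
    "\<And>k. \<bar>z k - x k\<bar> \<le> 2 ^ (k + 1) * \<epsilon>" "\<And>k. \<bar>z (k + n) - x k\<bar> \<le> 2 ^ (k + 1) * \<epsilon>"
    "(\<Sum>i<n. h (z i) (z (Suc i))) < n * alpha (\<lambda>z. h (z 0) (z 1)) + \<delta>"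
proof -
  obtain n z where n: "n \<ge> 1" and z: "z \<in> Bset x x n \<epsilon>"
    and orbit: "(\<Sum>i<n. h (z i) (z (Suc i)) - alpha (\<lambda>z. h (z 0) (z 1))) < \<delta>"
    using aubry_returning_orbit[OF x \<open>\<epsilon> > 0\<close> \<open>\<delta> > 0\<close>] by (auto simp: shift_funpow)
  have X: "x \<in> Xsp" "z \<in> Xsp" "(\<lambda>i. z (i + n)) \<in> Xsp"
    using x z by (auto simp: aubry_def Bset_def Xsp_def)
  have dist: "dX x z < \<epsilon>" "dX (\<lambda>i. z (i + n)) x < \<epsilon>"
    using z by (auto simp: Bset_def shift_funpow)
  have "\<bar>z k - x k\<bar> \<le> 2 ^ (k + 1) * \<epsilon>" "\<bar>z (k + n) - x k\<bar> \<le> 2 ^ (k + 1) * \<epsilon>" for k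
    using abs_diff_le_dX[OF X(1,2), of k] abs_diff_le_dX[OF X(3,1), of k] dist
      mult_left_mono[of _ \<epsilon> "2 ^ (k + 1)"]
    by (auto simp: abs_minus_commute intro: order_trans)
  moreover have "z i \<in> {0..1}" for i using X(2) by (simp add: Xsp_def)
  moreover have "(\<Sum>i<n. h (z i) (z (Suc i))) < n * alpha (\<lambda>z. h (z 0) (z 1)) + \<delta>"
    using orbit by (simp add: sum_subtractf)
  moreover have "0 < n" using n by simp
  ultimately show thesis using that by blast
qed

lemma aubry_shadowed_by_cycles:
  fixes h :: "real \<Rightarrow> real \<Rightarrow> real"
  assumes lip: "C-lipschitz_on ({0..1} \<times> {0..1}) (\<lambda>(a, b). h a b)"
    and x: "x \<in> aubry (\<lambda>z. h (z 0) (z 1))" and "\<epsilon> > 0" "\<delta> > 0"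
  obtains n z where "0 < n" "\<And>i. z i \<in> {0..1}"
    "\<And>k. \<bar>z k - x k\<bar> \<le> 2 ^ (k + 1) * \<epsilon>" "\<And>k. \<bar>z (k + n) - x k\<bar> \<le> 2 ^ (k + 1) * \<epsilon>"
    "cycle_cost h (map z [0..<n]) < n * hstar h + \<delta>"
proof -
  have C: "0 \<le> C" using lipschitz_on_nonneg[OF lip] .
  define \<epsilon>' where "\<epsilon>' = min \<epsilon> (\<delta> / (8 * (C + 1)))"
  have \<epsilon>': "0 < \<epsilon>'" "\<epsilon>' \<le> \<epsilon>" using assms C by (auto simp: \<epsilon>'_def)
  have "C * (4 * \<epsilon>') \<le> C * (4 * (\<delta> / (8 * (C + 1))))"
    using C by (intro mult_left_mono) (auto simp: \<epsilon>'_def)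
  also have "\<dots> \<le> \<delta> / 2" using C assms by (simp add: field_simps)
  finally have C\<epsilon>': "C * (4 * \<epsilon>') \<le> \<delta> / 2" .
  have "0 < \<delta> / 2" using assms by simp
  with aubry_returning_path[OF x \<epsilon>'(1)] obtain n z where n: "0 < n" and z01: "\<And>i. z i \<in> {0..1}"
    and close: "\<And>k. \<bar>z k - x k\<bar> \<le> 2 ^ (k + 1) * \<epsilon>'" "\<And>k. \<bar>z (k + n) - x k\<bar> \<le> 2 ^ (k + 1) * \<epsilon>'"
    and path: "(\<Sum>i<n. h (z i) (z (Suc i))) < n * alpha (\<lambda>z. h (z 0) (z 1)) + \<delta> / 2"
    by blast
  have "h (z (n - 1)) (z 0) - h (z (n - 1)) (z n) \<le> C * \<bar>z 0 - z n\<bar>"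
    using lipschitz_on_Times_abs_diff[OF lip, of "z (n - 1)" "z (n - 1)" "z 0" "z n"] z01 by simp
  also have "\<dots> \<le> C * (4 * \<epsilon>')"
    using close(1)[of 0] close(2)[of 0] C by (intro mult_left_mono) auto
  finally have closing: "h (z (n - 1)) (z 0) - h (z (n - 1)) (z n) \<le> \<delta> / 2"
    using C\<epsilon>' by linarith
  have "n * alpha (\<lambda>z. h (z 0) (z 1)) \<le> n * hstar h"
    using alpha_le_hstar[OF lipschitz_on_continuous_on[OF lip]] by (simp add: mult_left_mono)
  then have "cycle_cost h (map z [0..<n]) < n * hstar h + \<delta>"
    using path closing sum_path_eq_cycle_cost[OF n, of h z] by linarith
  moreover have "\<bar>z k - x k\<bar> \<le> 2 ^ (k + 1) * \<epsilon>" "\<bar>z (k + n) - x k\<bar> \<le> 2 ^ (k + 1) * \<epsilon>" for k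
    using order_trans[OF close(1)[of k] mult_left_mono[OF \<open>\<epsilon>' \<le> \<epsilon>\<close>]]
      order_trans[OF close(2)[of k] mult_left_mono[OF \<open>\<epsilon>' \<le> \<epsilon>\<close>]] by simp_all
  ultimately show thesis using that n z01 by blast
qed

lemma aubry_diagonal_eq_hstar:
  fixes h :: "real \<Rightarrow> real \<Rightarrow> real"
  assumes monge: "monge_on {0..1} h" and lip: "C-lipschitz_on ({0..1} \<times> {0..1}) (\<lambda>(a, b). h a b)"
    and x: "x \<in> aubry (\<lambda>z. h (z 0) (z 1))"
  shows "h (x 0) (x 0) = hstar h"
proof (rule antisym)
  have cont: "continuous_on ({0..1} \<times> {0..1}) (\<lambda>(a, b). h a b)"
    using lip by (rule lipschitz_on_continuous_on)
  have x0: "x 0 \<in> {0..1}" using x by (simp add: aubry_def Xsp_def)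
  then show "hstar h \<le> h (x 0) (x 0)" by (rule hstar_le[OF cont])
  have C: "0 \<le> C" using lipschitz_on_nonneg[OF lip] .
  show "h (x 0) (x 0) \<le> hstar h"
  proof (rule field_le_epsilon)
    fix e :: real assume e: "0 < e"
    define \<epsilon> where "\<epsilon> = e / (8 * (C + 1))"
    have "0 < \<epsilon>" "0 < e / 2" using e C by (simp_all add: \<epsilon>_def)
    with aubry_shadowed_by_cycles[OF lip x] obtain n z where n: "0 < n" and z01: "\<And>i. z i \<in> {0..1}"
      and close: "\<And>k. \<bar>z k - x k\<bar> \<le> 2 ^ (k + 1) * \<epsilon>"
      and "\<And>k. \<bar>z (k + n) - x k\<bar> \<le> 2 ^ (k + 1) * \<epsilon>"
      and cycle: "cycle_cost h (map z [0..<n]) < n * hstar h + e / 2"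
      by blast
    obtain m where m: "n = Suc m" using n gr0_conv_Suc by blast
    have "h (z 0) (z 0) + m * hstar h \<le> cycle_cost h (map z [0..<n])"
      using hd_diagonal_add_hstar_le_cycle_cost[OF monge cont, of "z 0" "map z [1..<n]"] z01
      by (force simp: m upt_conv_Cons simp del: upt_Suc)
    then have "h (z 0) (z 0) < hstar h + e / 2"
      using cycle by (simp add: m algebra_simps)
    moreover have "\<bar>h (x 0) (x 0) - h (z 0) (z 0)\<bar> \<le> C * (\<bar>x 0 - z 0\<bar> + \<bar>x 0 - z 0\<bar>)"
      by (rule lipschitz_on_Times_abs_diff[OF lip]) (use x0 z01 in auto)
    moreover have "\<dots> \<le> C * (4 * \<epsilon>)"
      using close[of 0] C by (intro mult_left_mono) (auto simp: abs_minus_commute)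
    moreover have "C * (4 * \<epsilon>) \<le> e / 2"
      using C e by (simp add: \<epsilon>_def field_simps)
    ultimately show "h (x 0) (x 0) \<le> hstar h + e" by linarith
  qed
qed

lemma aubry_periodic_shadowing_step:
  fixes h :: "real \<Rightarrow> real \<Rightarrow> real"
  assumes lip: "C-lipschitz_on ({0..1} \<times> {0..1}) (\<lambda>(a, b). h a b)"
    and x: "x \<in> aubry (\<lambda>z. h (z 0) (z 1))" and per: "\<And>i. x (i + p) = x i" and "j < p"
    and sep: "\<And>u v. x u \<noteq> x v \<Longrightarrow> 2 * e < \<bar>x u - x v\<bar>" and "0 < e" "0 < \<delta>"
  obtains n z i where "0 < n" "\<And>k. z k \<in> {0..1}" "i < n"
    "\<bar>z i - x j\<bar> \<le> e" "\<bar>z (Suc i mod n) - x (Suc j)\<bar> \<le> e"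
    "cycle_cost h (map z [0..<n]) < n * hstar h + \<delta>"
proof -
  have "0 < e / 2 ^ (2 * p + 1)" using \<open>0 < e\<close> by simp
  with aubry_shadowed_by_cycles[OF lip x _ \<open>0 < \<delta>\<close>] obtain n z where n: "0 < n"
    and z01: "\<And>k. z k \<in> {0..1}"
    and close: "\<And>k. \<bar>z k - x k\<bar> \<le> 2 ^ (k + 1) * (e / 2 ^ (2 * p + 1))"
      "\<And>k. \<bar>z (k + n) - x k\<bar> \<le> 2 ^ (k + 1) * (e / 2 ^ (2 * p + 1))"
    and cycle: "cycle_cost h (map z [0..<n]) < n * hstar h + \<delta>"
    by blast
  have scale: "2 ^ (k + 1) * (e / 2 ^ (2 * p + 1)) \<le> e" if "k \<le> 2 * p" for k
  proof -
    have "(2::real) ^ (k + 1) \<le> 2 ^ (2 * p + 1)" using that by (intro power_increasing) auto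
    then show ?thesis using \<open>0 < e\<close> by (simp add: field_simps)
  qed
  have "\<bar>z k - x k\<bar> \<le> e" "\<bar>z (k + n) - x k\<bar> \<le> e" if "k \<le> 2 * p" for k
    using order_trans[OF close(1) scale[OF that]] order_trans[OF close(2) scale[OF that]] by simp_all
  then obtain i where "i < n" "\<bar>z i - x j\<bar> \<le> e" "\<bar>z (Suc i mod n) - x (Suc j)\<bar> \<le> e"
    using shadowing_cyclic_step[of x p j n z e, OF per \<open>j < p\<close> n _ _ sep] by blast
  then show thesis using that n z01 cycle by blast
qed

lemma aubry_periodic_constant:
  fixes h :: "real \<Rightarrow> real \<Rightarrow> real"
  assumes monge: "strictly_monge_on {0..1} h" and lip: "C-lipschitz_on ({0..1} \<times> {0..1}) (\<lambda>(a, b). h a b)"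
    and x: "x \<in> aubry (\<lambda>z. h (z 0) (z 1))" and "0 < p" and fixed: "(shift ^^ p) x = x"
  shows "x = (\<lambda>_. x 0)"
proof (rule ccontr)
  assume nonconst: "x \<noteq> (\<lambda>_. x 0)"
  have per: "x (i + p) = x i" for i using fun_cong[OF fixed, of i] by (simp add: shift_funpow)
  have x01: "x i \<in> {0..1}" for i using x by (simp add: aubry_def Xsp_def)
  obtain j where j: "j < p" "x j < x (Suc j)"
    using periodic_nonconstant_ascent[of x p, OF per \<open>0 < p\<close> nonconst] by blast
  obtain g where g: "0 < g" "\<And>u v. x u \<noteq> x v \<Longrightarrow> g \<le> \<bar>x u - x v\<bar>"
    using finite_range_separated[OF periodic_finite_range[of x p, OF per \<open>0 < p\<close>]] by blast
  define a where "a = (3 * x j + x (Suc j)) / 4"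
  define t where "t = (x j + x (Suc j)) / 2"
  define b where "b = (x j + 3 * x (Suc j)) / 4"
  \<comment> \<open>small enough that the shadowed step still goes from below \<open>a\<close> to above \<open>b\<close>,
    and that \<open>2 e\<close> stays below the gap between distinct values of \<open>x\<close>\<close>
  define e where "e = min (g / 3) ((x (Suc j) - x j) / 4)"
  have abt: "a < t" "t < b" "a \<in> {0..1}" "t \<in> {0..1}" "b \<in> {0..1}"
    using j x01[of j] x01[of "Suc j"] by (auto simp: a_def t_def b_def)
  have e: "0 < e" "e \<le> (x (Suc j) - x j) / 4"
    using j g unfolding e_def by (simp_all only: min_less_iff_conj min.cobounded2) simp
  have sep: "2 * e < \<bar>x u - x v\<bar>" if "x u \<noteq> x v" for u v
    using g(1) g(2)[OF that] min.cobounded1[of "g / 3" "(x (Suc j) - x j) / 4"] by (simp add: e_def)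
  have "0 < twist h a t t b"
    using strictly_monge_onD[OF monge] abt by blast
  with aubry_periodic_shadowing_step[of C h x p j e, OF lip x per j(1) sep e(1)]
  obtain n z i where "0 < n" "\<And>k. z k \<in> {0..1}" "i < n"
    "\<bar>z i - x j\<bar> \<le> e" "\<bar>z (Suc i mod n) - x (Suc j)\<bar> \<le> e"
    and cycle: "cycle_cost h (map z [0..<n]) < n * hstar h + twist h a t t b"
    by blast
  then have "length (map z [0..<n]) * hstar h + twist h a t t b \<le> cycle_cost h (map z [0..<n])"
    using e(2) abt
    by (intro hstar_add_twist_le_cycle_cost[OF strictly_monge_imp_monge[OF monge]
        lipschitz_on_continuous_on[OF lip]]) (auto simp: a_def b_def)
  with cycle show False by simp
qed

lemma classH_strictly_monge:
  assumes "classH h"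
  shows "strictly_monge_on {0..1} h"
  unfolding strictly_monge_on_def twist_def
proof (intro ballI impI)
  fix p q r s :: real
  assume "p \<in> {0..1}" "q \<in> {0..1}" "r \<in> {0..1}" "s \<in> {0..1}" "p < q" "r < s"
  then have "h p r + h q s < h p s + h q r" using assms unfolding classH_def by blast
  then show "0 < h p s + h q r - h p r - h q s" by simp
qed

theorem lemma3p3:
  fixes h :: "real \<Rightarrow> real \<Rightarrow> real" and x :: "nat \<Rightarrow> real"
  assumes "classH h"
    and "x \<in> aubry (\<lambda>z. h (z 0) (z 1))"
    and "\<exists>p>0. (shift ^^ p) x = x"
  shows "\<exists>a \<in> mset_h h. x = (\<lambda>_. a)"
proof -
  obtain C where lip: "C-lipschitz_on ({0..1} \<times> {0..1}) (\<lambda>(a, b). h a b)"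
    using assms(1) by (auto simp: classH_def)
  have monge: "strictly_monge_on {0..1} h"
    using assms(1) by (rule classH_strictly_monge)
  obtain p where "0 < p" "(shift ^^ p) x = x" using assms(3) by blast
  then have "x = (\<lambda>_. x 0)"
    using aubry_periodic_constant[OF monge lip assms(2)] by blast
  moreover have "h (x 0) (x 0) = hstar h"
    using aubry_diagonal_eq_hstar[OF strictly_monge_imp_monge[OF monge] lip assms(2)] .
  moreover have "x 0 \<in> {0..1}" using assms(2) by (simp add: aubry_def Xsp_def)
  ultimately show ?thesis by (auto simp: mset_h_def)
qed

end
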